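(* Let $\varphi,\psi:\mathbb{H}\to\mathbb{H}$ be linear isometries with $\varphi(1)=1$. The algebra $\mathbb{H}\times\mathbb{H}_{(\varphi,\psi)}$ satisfies $(z^2,z^2,z^2)=0$ for all $z$ if and only if (i) $\varphi(\varphi(x)x)=\varphi(x)x$ for all $x\in\mathbb{H}$, (ii) $\varphi(\bar x\psi(x))=\bar x\psi(x)$ for all $x\in\mathbb{H}$, (iii) $\psi(\psi(y)\bar x+y\varphi(x))=\psi(y)\bar x+y\varphi(x)$ for all $x,y\in\mathbb{H}$.
   Context: $(a,b,c)=(ab)c-a(bc)$. On $\mathbb{H}\times\mathbb{H}$ the Cayley–Dickson product is $(x,y)\bullet(u,v)=(xu-\bar v y,\ y\bar u+vx)$. $\mathbb{H}\times\mathbb{H}_{(\varphi,\psi)}$ denotes $\mathbb{H}\times\mathbb{H}$ with product $(x,y)\odot(u,v)=(\varphi(x),\psi(y))\bullet(u,v)$ and norm $\|(x,y)\|^2=|x|^2+|y|^2$; it has left unit $(1,0)$. *)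

theory Defs
  imports "HOL-Analysis.Analysis"
begin

text \<open>Quaternions: a + b i + c j + d k is represented as (a,b,c,d) in R^4.
  The product-type instances give the componentwise vector space structure and the
  Euclidean norm sqrt(a^2+b^2+c^2+d^2).\<close>

type_synonym quat = "real \<times> real \<times> real \<times> real"

definition qone :: quat where "qone = (1, 0, 0, 0)"

definition qmult :: "quat \<Rightarrow> quat \<Rightarrow> quat" (infixl "\<cdot>\<^sub>q" 70) where
  "qmult p q = (case p of (a1, b1, c1, d1) \<Rightarrow> case q of (a2, b2, c2, d2) \<Rightarrow>
     (a1*a2 - b1*b2 - c1*c2 - d1*d2,
      a1*b2 + b1*a2 + c1*d2 - d1*c2,
      a1*c2 - b1*d2 + c1*a2 + d1*b2,
      a1*d2 + b1*c2 - c1*b2 + d1*a2))"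

definition qcnj :: "quat \<Rightarrow> quat" where
  "qcnj p = (case p of (a, b, c, d) \<Rightarrow> (a, -b, -c, -d))"

definition cd_mult :: "quat \<times> quat \<Rightarrow> quat \<times> quat \<Rightarrow> quat \<times> quat" where
  "cd_mult p q = (case p of (x, y) \<Rightarrow> case q of (u, v) \<Rightarrow>
     (x \<cdot>\<^sub>q u - qcnj v \<cdot>\<^sub>q y, y \<cdot>\<^sub>q qcnj u + v \<cdot>\<^sub>q x))"

definition tw_mult :: "(quat \<Rightarrow> quat) \<Rightarrow> (quat \<Rightarrow> quat) \<Rightarrow> quat \<times> quat \<Rightarrow> quat \<times> quat \<Rightarrow> quat \<times> quat" where
  "tw_mult \<phi> \<psi> p q = (case p of (x, y) \<Rightarrow> cd_mult (\<phi> x, \<psi> y) q)"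

definition assoc :: "('a \<Rightarrow> 'a \<Rightarrow> 'a::ab_group_add) \<Rightarrow> 'a \<Rightarrow> 'a \<Rightarrow> 'a \<Rightarrow> 'a" where
  "assoc m a b c = m (m a b) c - m a (m b c)"

definition linear_isometry :: "(quat \<Rightarrow> quat) \<Rightarrow> bool" where
  "linear_isometry f \<longleftrightarrow> linear f \<and> (\<forall>x. norm (f x) = norm x)"

end

theory Submission
  imports Defs
begin

text \<open>Write \<open>P = (\<phi>, \<psi>)\<close>, so that \<open>z \<odot> w = P(z) w\<close> in the Cayley--Dickson algebra and
  \<open>(1, 0)\<close> is a left unit. The identity \<open>(z\<^sup>2, z\<^sup>2, z\<^sup>2) = 0\<close> holds for all \<open>z\<close> iff every
  square \<open>z \<odot> z\<close> is fixed by \<open>P\<close>. If \<open>w\<close> is fixed, then \<open>w \<odot> w = w w\<close> lies in the span of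
  \<open>w\<close> and \<open>1\<close>, hence is fixed as well, and \<open>(w, w, w)\<close> reduces to the octonion identity
  \<open>(w w) w = w (w w)\<close>. Conversely, put \<open>z = 1 + t u\<close>: the associator of \<open>z\<^sup>2\<close> is a
  polynomial in \<open>t\<close>, its coefficient of \<open>t\<close> forces \<open>P\<^sup>2 = id\<close> (\<open>P\<close> is injective, being
  isometric), and then its coefficient of \<open>t\<^sup>2\<close> reduces to \<open>P(u \<odot> u) = u \<odot> u\<close>. Finally,
  \<open>P\<close> fixes \<open>(x, y) \<odot> (x, y) = (\<phi>(x) x - conj(y) \<psi>(y), \<psi>(y) conj(x) + y \<phi>(x))\<close> for all \<open>x, y\<close>
  exactly when (i)--(iii) hold.\<close>

lemma bilinear_qmult: "bilinear qmult"
  unfolding bilinear_def linear_iff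
proof (intro conjI allI)
  fix x y z :: quat and c :: real
  show "z \<cdot>\<^sub>q (x + y) = z \<cdot>\<^sub>q x + z \<cdot>\<^sub>q y" "(x + y) \<cdot>\<^sub>q z = x \<cdot>\<^sub>q z + y \<cdot>\<^sub>q z"
    by (cases x rule: prod_cases4; cases y rule: prod_cases4; cases z rule: prod_cases4;
        simp add: qmult_def algebra_simps)+
  show "z \<cdot>\<^sub>q (c *\<^sub>R x) = c *\<^sub>R (z \<cdot>\<^sub>q x)" "(c *\<^sub>R x) \<cdot>\<^sub>q z = c *\<^sub>R (x \<cdot>\<^sub>q z)"
    by (cases x rule: prod_cases4; cases z rule: prod_cases4; simp add: qmult_def algebra_simps)+
qed

lemma linear_qcnj: "linear qcnj"
  unfolding linear_iff by (auto simp: qcnj_def split: prod.splits)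

lemma qmult_qone_left [simp]: "qone \<cdot>\<^sub>q x = x"
  by (cases x rule: prod_cases4) (simp add: qmult_def qone_def)

lemma qmult_qone_right [simp]: "x \<cdot>\<^sub>q qone = x"
  by (cases x rule: prod_cases4) (simp add: qmult_def qone_def)

lemma qcnj_qone [simp]: "qcnj qone = qone"
  by (simp add: qcnj_def qone_def)

lemma qmult_0_left [simp]: "0 \<cdot>\<^sub>q x = 0"
  by (rule bilinear_lzero[OF bilinear_qmult])

lemma qmult_0_right [simp]: "x \<cdot>\<^sub>q 0 = 0"
  by (rule bilinear_rzero[OF bilinear_qmult])

lemma qcnj_0 [simp]: "qcnj 0 = 0"
  by (rule linear_0[OF linear_qcnj])

lemma bilinear_cd_mult: "bilinear cd_mult"
proof -
  have q: "bilinear qmult" and c: "linear qcnj" by (fact bilinear_qmult linear_qcnj)+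
  show ?thesis
    unfolding bilinear_def linear_iff cd_mult_def case_prod_beta
    by (simp add: bilinear_ladd[OF q] bilinear_radd[OF q] bilinear_lmul[OF q] bilinear_rmul[OF q]
        linear_add[OF c] linear_scale[OF c] scaleR_diff_right scaleR_add_right)
qed

abbreviation cd_one :: "quat \<times> quat" where "cd_one \<equiv> (qone, 0)"

lemma cd_mult_one_left [simp]: "cd_mult cd_one w = w"
  by (cases w) (simp add: cd_mult_def)

lemma cd_mult_one_right [simp]: "cd_mult w cd_one = w"
  by (cases w) (simp add: cd_mult_def)

lemma cd_mult_square: "cd_mult w w = (2 * fst (fst w)) *\<^sub>R w - (w \<bullet> w) *\<^sub>R cd_one"
proof -
  obtain a b where "w = (a, b)" by (cases w)
  then show ?thesis
    by (cases a rule: prod_cases4; cases b rule: prod_cases4)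
       (simp add: cd_mult_def qmult_def qcnj_def qone_def inner_prod_def algebra_simps power2_eq_square)
qed

lemma cd_mult_square_commute: "cd_mult (cd_mult w w) w = cd_mult w (cd_mult w w)"
proof -
  obtain a b where square: "cd_mult w w = a *\<^sub>R w - b *\<^sub>R cd_one"
    using cd_mult_square by blast
  show ?thesis
    unfolding square
    by (simp add: bilinear_lsub[OF bilinear_cd_mult] bilinear_rsub[OF bilinear_cd_mult]
        bilinear_lmul[OF bilinear_cd_mult] bilinear_rmul[OF bilinear_cd_mult] del: scaleR_Pair)
qed

context
  fixes m :: "'a::real_vector \<Rightarrow> 'a \<Rightarrow> 'a"
  assumes bilinear_m: "bilinear m"
begin

lemma assoc_add_left: "assoc m (x + y) b c = assoc m x b c + assoc m y b c"
  and assoc_add_middle: "assoc m a (x + y) c = assoc m a x c + assoc m a y c"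
  and assoc_add_right: "assoc m a b (x + y) = assoc m a b x + assoc m a b y"
  by (simp_all add: assoc_def bilinear_ladd[OF bilinear_m] bilinear_radd[OF bilinear_m])

lemma assoc_scaleR_left: "assoc m (r *\<^sub>R x) b c = r *\<^sub>R assoc m x b c"
  and assoc_scaleR_middle: "assoc m a (r *\<^sub>R x) c = r *\<^sub>R assoc m a x c"
  and assoc_scaleR_right: "assoc m a b (r *\<^sub>R x) = r *\<^sub>R assoc m a b x"
  by (simp_all add: assoc_def bilinear_lmul[OF bilinear_m] bilinear_rmul[OF bilinear_m]
      scaleR_diff_right)

end

lemma vector_polyfun_eq_0:
  fixes c :: "nat \<Rightarrow> 'a::real_inner"
  assumes "\<And>t::real. (\<Sum>i\<le>n. t ^ i *\<^sub>R c i) = 0" and "k \<le> n"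
  shows "c k = 0"
proof -
  have "(\<Sum>i\<le>n. (c i \<bullet> c k) * t ^ i) = 0" for t :: real
    using arg_cong[OF assms(1)[of t], of "\<lambda>v. v \<bullet> c k"]
    by (simp add: inner_sum_left mult.commute)
  then have "c k \<bullet> c k = 0"
    using polyfun_eq_0[of "\<lambda>i. c i \<bullet> c k" n] assms(2) by simp
  then show ?thesis by simp
qed

lemma assoc_cube_low_coeffs:
  fixes m :: "'a::real_inner \<Rightarrow> 'a \<Rightarrow> 'a"
  assumes m: "bilinear m" and e: "\<And>y z. assoc m e y z = 0"
    and cube: "\<And>t::real. let x = e + t *\<^sub>R s + t\<^sup>2 *\<^sub>R q in assoc m x x x = 0"
  shows "assoc m s e e = 0" and "assoc m q e e + assoc m s s e + assoc m s e s = 0"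
proof -
  let ?A = "assoc m"
  define c where "c = [0, ?A s e e, ?A q e e + ?A s s e + ?A s e s,
      ?A s s s + ?A q s e + ?A q e s + ?A s q e + ?A s e q,
      ?A q q e + ?A q e q + ?A s s q + ?A s q s + ?A q s s,
      ?A q q s + ?A q s q + ?A s q q, ?A q q q]"
  have "(\<Sum>i\<le>6. t ^ i *\<^sub>R c ! i) = 0" for t :: real
  proof -
    have "?A (e + t *\<^sub>R s + t\<^sup>2 *\<^sub>R q) (e + t *\<^sub>R s + t\<^sup>2 *\<^sub>R q) (e + t *\<^sub>R s + t\<^sup>2 *\<^sub>R q)
        = (\<Sum>i\<le>6. t ^ i *\<^sub>R c ! i)"
      unfolding c_def
      by (simp only: assoc_add_left[OF m] assoc_add_middle[OF m] assoc_add_right[OF m]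
          assoc_scaleR_left[OF m] assoc_scaleR_middle[OF m] assoc_scaleR_right[OF m] e)
         (simp add: eval_nat_numeral, simp add: algebra_simps)
    with cube[of t] show ?thesis by (simp add: Let_def)
  qed
  from vector_polyfun_eq_0[OF this, of 1] vector_polyfun_eq_0[OF this, of 2]
  show "?A s e e = 0" "?A q e e + ?A s s e + ?A s e s = 0"
    by (simp_all add: c_def)
qed

lemma tw_mult_eq_cd_mult: "tw_mult \<phi> \<psi> p q = cd_mult (map_prod \<phi> \<psi> p) q"
  by (simp add: tw_mult_def map_prod_def case_prod_beta)

lemma tw_mult_square:
  "tw_mult \<phi> \<psi> (x, y) (x, y) = (\<phi> x \<cdot>\<^sub>q x - qcnj y \<cdot>\<^sub>q \<psi> y, \<psi> y \<cdot>\<^sub>q qcnj x + y \<cdot>\<^sub>q \<phi> x)"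
  by (simp add: tw_mult_def cd_mult_def)

locale twisted_cayley_dickson =
  fixes \<phi> \<psi> :: "quat \<Rightarrow> quat"
  assumes linear_\<phi>: "linear \<phi>" and linear_\<psi>: "linear \<psi>" and \<phi>_qone [simp]: "\<phi> qone = qone"
begin

abbreviation twist :: "quat \<times> quat \<Rightarrow> quat \<times> quat" where "twist \<equiv> map_prod \<phi> \<psi>"

abbreviation tw :: "quat \<times> quat \<Rightarrow> quat \<times> quat \<Rightarrow> quat \<times> quat" where "tw \<equiv> tw_mult \<phi> \<psi>"

lemma linear_twist: "linear twist"
  by (rule linearI)
     (simp_all add: prod_eq_iff linear_add[OF linear_\<phi>] linear_add[OF linear_\<psi>]
       linear_scale[OF linear_\<phi>] linear_scale[OF linear_\<psi>])

lemma \<phi>_0 [simp]: "\<phi> 0 = 0" and \<psi>_0 [simp]: "\<psi> 0 = 0"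
  by (rule linear_0[OF linear_\<phi>], rule linear_0[OF linear_\<psi>])

lemma bilinear_tw: "bilinear tw"
  unfolding bilinear_def tw_mult_eq_cd_mult
proof (intro allI conjI)
  fix p q
  show "linear (\<lambda>q. cd_mult (twist p) q)"
    using bilinear_cd_mult unfolding bilinear_def by blast
  have "linear (\<lambda>x. cd_mult x q)"
    using bilinear_cd_mult unfolding bilinear_def by blast
  then show "linear (\<lambda>p. cd_mult (twist p) q)"
    using linear_compose[OF linear_twist] by (simp add: o_def)
qed

lemma tw_one_left [simp]: "tw cd_one q = q"
  and tw_one_right [simp]: "tw p cd_one = twist p"
  by (simp_all add: tw_mult_eq_cd_mult)

lemma assoc_one_left [simp]: "assoc tw cd_one y z = 0"
  by (simp add: assoc_def)

lemma assoc_one_one: "assoc tw x cd_one cd_one = twist (twist x) - twist x"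
  by (simp add: assoc_def)

lemma assoc_one_middle: "twist x = x \<Longrightarrow> assoc tw x cd_one y = 0"
  by (simp add: assoc_def tw_mult_eq_cd_mult)

lemma assoc_one_right: "assoc tw x y cd_one = twist (tw x y) - tw x (twist y)"
  by (simp add: assoc_def)

lemma twist_cd_mult_square: "twist w = w \<Longrightarrow> twist (cd_mult w w) = cd_mult w w"
proof -
  obtain a b where square: "cd_mult w w = a *\<^sub>R w - b *\<^sub>R cd_one"
    using cd_mult_square by blast
  assume "twist w = w"
  then show ?thesis
    unfolding square by (simp add: linear_diff[OF linear_twist] linear_scale[OF linear_twist] del: scaleR_Pair)
qed

lemma assoc_cube_eq_0_if_twist_fixed: "twist w = w \<Longrightarrow> assoc tw w w w = 0"
  by (simp add: assoc_def tw_mult_eq_cd_mult twist_cd_mult_square cd_mult_square_commute)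

lemma tw_square_one_plus: "tw (cd_one + t *\<^sub>R u) (cd_one + t *\<^sub>R u)
    = cd_one + t *\<^sub>R (u + twist u) + t\<^sup>2 *\<^sub>R tw u u"
  by (simp add: bilinear_ladd[OF bilinear_tw] bilinear_radd[OF bilinear_tw]
      bilinear_lmul[OF bilinear_tw] bilinear_rmul[OF bilinear_tw]
      linear_add[OF linear_twist] linear_scale[OF linear_twist]
      power2_eq_square algebra_simps del: scaleR_Pair)

context
  assumes cube: "\<And>z. let z2 = tw z z in assoc tw z2 z2 z2 = 0"
begin

lemma assoc_low_coeffs_eq_0:
  shows "assoc tw (u + twist u) cd_one cd_one = 0"
    and "assoc tw (tw u u) cd_one cd_one + assoc tw (u + twist u) (u + twist u) cd_one
        + assoc tw (u + twist u) cd_one (u + twist u) = 0"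
  using assoc_cube_low_coeffs[OF bilinear_tw assoc_one_left, of "u + twist u" "tw u u"]
    cube[of "cd_one + _ *\<^sub>R u"]
  by (simp_all add: tw_square_one_plus del: scaleR_Pair)

lemma twist_twist:
  assumes "inj twist"
  shows "twist (twist x) = x"
proof -
  have "twist (twist (twist x) - x) = 0"
    using assoc_low_coeffs_eq_0(1)[of x]
    by (simp add: assoc_one_one linear_add[OF linear_twist] linear_diff[OF linear_twist])
  then have "twist (twist x) - x = 0"
    using assms linear_inj_iff_eq_0[OF linear_twist] by blast
  then show ?thesis by simp
qed

lemma twist_tw_square:
  assumes "inj twist"
  shows "twist (tw u u) = tw u u"
proof -
  define s where "s = u + twist u"
  have s_fixed: "twist s = s"
    by (simp add: s_def linear_add[OF linear_twist] twist_twist[OF assms] add.commute)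
  have "assoc tw s cd_one s = 0"
    using s_fixed by (rule assoc_one_middle)
  moreover have "assoc tw s s cd_one = 0"
    by (simp add: assoc_one_right s_fixed tw_mult_eq_cd_mult twist_cd_mult_square)
  moreover have "assoc tw (tw u u) cd_one cd_one = tw u u - twist (tw u u)"
    by (simp add: assoc_one_one twist_twist[OF assms])
  ultimately show ?thesis
    using assoc_low_coeffs_eq_0(2)[of u] unfolding s_def by simp
qed

end

lemma assoc_cube_eq_0_iff_twist_tw_square:
  assumes "inj twist"
  shows "(\<forall>z. let z2 = tw z z in assoc tw z2 z2 z2 = 0) \<longleftrightarrow> (\<forall>z. twist (tw z z) = tw z z)"
  using twist_tw_square[OF _ assms] assoc_cube_eq_0_if_twist_fixed by metis

lemma twist_tw_square_iff:
  "(\<forall>z. twist (tw z z) = tw z z) \<longleftrightarrow>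
     (\<forall>x. \<phi> (\<phi> x \<cdot>\<^sub>q x) = \<phi> x \<cdot>\<^sub>q x)
   \<and> (\<forall>x. \<phi> (qcnj x \<cdot>\<^sub>q \<psi> x) = qcnj x \<cdot>\<^sub>q \<psi> x)
   \<and> (\<forall>x y. \<psi> (\<psi> y \<cdot>\<^sub>q qcnj x + y \<cdot>\<^sub>q \<phi> x) = \<psi> y \<cdot>\<^sub>q qcnj x + y \<cdot>\<^sub>q \<phi> x)"
  (is "_ \<longleftrightarrow> ?i \<and> ?ii \<and> ?iii")
proof -
  have fixed_iff: "twist (tw (x, y) (x, y)) = tw (x, y) (x, y) \<longleftrightarrow>
      \<phi> (\<phi> x \<cdot>\<^sub>q x) - \<phi> (qcnj y \<cdot>\<^sub>q \<psi> y) = \<phi> x \<cdot>\<^sub>q x - qcnj y \<cdot>\<^sub>q \<psi> y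
      \<and> \<psi> (\<psi> y \<cdot>\<^sub>q qcnj x + y \<cdot>\<^sub>q \<phi> x) = \<psi> y \<cdot>\<^sub>q qcnj x + y \<cdot>\<^sub>q \<phi> x" for x y
    by (simp add: tw_mult_square linear_diff[OF linear_\<phi>])
  show ?thesis
  proof
    assume "\<forall>z. twist (tw z z) = tw z z"
    then have fixed: "\<phi> (\<phi> x \<cdot>\<^sub>q x) - \<phi> (qcnj y \<cdot>\<^sub>q \<psi> y) = \<phi> x \<cdot>\<^sub>q x - qcnj y \<cdot>\<^sub>q \<psi> y
        \<and> \<psi> (\<psi> y \<cdot>\<^sub>q qcnj x + y \<cdot>\<^sub>q \<phi> x) = \<psi> y \<cdot>\<^sub>q qcnj x + y \<cdot>\<^sub>q \<phi> x" for x y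
      using fixed_iff by blast
    show "?i \<and> ?ii \<and> ?iii"
      using fixed[of _ 0] fixed[of 0] fixed by (simp add: linear_neg[OF linear_\<phi>])
  next
    assume "?i \<and> ?ii \<and> ?iii"
    then show "\<forall>z. twist (tw z z) = tw z z"
      using fixed_iff by auto
  qed
qed

end

lemma inj_linear_isometry: "linear_isometry f \<Longrightarrow> inj f"
  unfolding linear_isometry_def by (metis linear_inj_iff_eq_0 norm_eq_zero)

theorem proposition6:
  fixes \<phi> \<psi> :: "quat \<Rightarrow> quat"
  assumes "linear_isometry \<phi>" and "linear_isometry \<psi>" and "\<phi> qone = qone"
  shows "(\<forall>z. let z2 = tw_mult \<phi> \<psi> z z in assoc (tw_mult \<phi> \<psi>) z2 z2 z2 = 0)
    \<longleftrightarrow> ((\<forall>x. \<phi> (\<phi> x \<cdot>\<^sub>q x) = \<phi> x \<cdot>\<^sub>q x)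
       \<and> (\<forall>x. \<phi> (qcnj x \<cdot>\<^sub>q \<psi> x) = qcnj x \<cdot>\<^sub>q \<psi> x)
       \<and> (\<forall>x y. \<psi> (\<psi> y \<cdot>\<^sub>q qcnj x + y \<cdot>\<^sub>q \<phi> x) = \<psi> y \<cdot>\<^sub>q qcnj x + y \<cdot>\<^sub>q \<phi> x))"
proof -
  interpret twisted_cayley_dickson \<phi> \<psi>
    using assms by (simp add: twisted_cayley_dickson_def linear_isometry_def)
  have "inj (map_prod \<phi> \<psi>)"
    using assms(1,2) by (simp add: inj_linear_isometry prod.inj_map)
  then show ?thesis
    by (simp only: assoc_cube_eq_0_iff_twist_tw_square twist_tw_square_iff)
qed

end
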